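(* Let $S$ be a numerical semigroup with minimal generators $g_1<\dots<g_\nu$ whose Apéry set is $\gamma$-rectangular. Then there exist non-negative integers $\lambda_{i,j}$ ($2\le i\le\nu$, $1\le j\le\nu$) with $$(\gamma_i+1)g_i=\lambda_{i,1}g_1+\lambda_{i,2}g_2+\dots+\lambda_{i,\nu}g_\nu\quad (i=2,\dots,\nu),$$ and a permutation $\sigma$ of $\{1,\dots,\nu\}$ with $\sigma(1)=1$ such that $\lambda_{\sigma(i),\sigma(j)}=0$ whenever $2\le i\le j\le\nu$.
   Context: A numerical semigroup is a submonoid $S$ of $(\mathbb N,+)$ with finite complement in $\mathbb N$; $g_1<\dots<g_\nu$ is its minimal system of generators and $m=g_1$ its multiplicity. $\mathrm{Ap}(S)=\{s\in S: s-m\notin S\}$. A representation of $s\in S$ is an expression $s=\sum_{i=1}^\nu\lambda_ig_i$, $\lambda_i\in\mathbb N$; $\mathrm{ord}(s)$ is the maximum of $\sum\lambda_i$ over all representations, and a representation is maximal if $\sum\lambda_i=\mathrm{ord}(s)$. For $i=2,\dots,\nu$, $\gamma_i=\max\{h\in\mathbb N: hg_i\in\mathrm{Ap}(S),\ \mathrm{ord}(hg_i)=h,\ \text{and } hg_i \text{ has a unique maximal representation}\}$. $\mathrm{Ap}(S)$ is $\gamma$-rectangular if $\mathrm{Ap}(S)=\{\sum_{i=2}^\nu\lambda_ig_i: 0\le\lambda_i\le\gamma_i\}$. *)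

theory Defs
  imports Main
begin

definition numerical_semigroup :: "nat set \<Rightarrow> bool" where
  "numerical_semigroup S \<longleftrightarrow>
     0 \<in> S \<and> (\<forall>a\<in>S. \<forall>b\<in>S. a + b \<in> S) \<and> finite (UNIV - S)"

definition coeffs :: "nat \<Rightarrow> (nat \<Rightarrow> nat) set" where
  "coeffs nu = {l. \<forall>i. i \<notin> {1..nu} \<longrightarrow> l i = 0}"

definition reps :: "(nat \<Rightarrow> nat) \<Rightarrow> nat \<Rightarrow> nat \<Rightarrow> (nat \<Rightarrow> nat) set" where
  "reps g nu s = {l \<in> coeffs nu. s = (\<Sum>i=1..nu. l i * g i)}"

definition min_gens :: "nat set \<Rightarrow> (nat \<Rightarrow> nat) \<Rightarrow> nat \<Rightarrow> bool" where
  "min_gens S g nu \<longleftrightarrow>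
     (\<forall>i\<in>{1..nu}. \<forall>j\<in>{1..nu}. i < j \<longrightarrow> g i < g j) \<and>
     S = {s. reps g nu s \<noteq> {}} \<and>
     (\<forall>k\<in>{1..nu}. \<not> (\<exists>l\<in>coeffs nu. l k = 0 \<and> g k = (\<Sum>i=1..nu. l i * g i)))"

definition apery :: "nat set \<Rightarrow> nat \<Rightarrow> nat set" where
  "apery S m = {s \<in> S. \<not> (m \<le> s \<and> s - m \<in> S)}"

definition ord_s :: "(nat \<Rightarrow> nat) \<Rightarrow> nat \<Rightarrow> nat \<Rightarrow> nat" where
  "ord_s g nu s = Max ((\<lambda>l. \<Sum>i=1..nu. l i) ` reps g nu s)"

definition max_reps :: "(nat \<Rightarrow> nat) \<Rightarrow> nat \<Rightarrow> nat \<Rightarrow> (nat \<Rightarrow> nat) set" where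
  "max_reps g nu s = {l \<in> reps g nu s. (\<Sum>i=1..nu. l i) = ord_s g nu s}"

definition gamma :: "nat set \<Rightarrow> (nat \<Rightarrow> nat) \<Rightarrow> nat \<Rightarrow> nat \<Rightarrow> nat" where
  "gamma S g nu i = Max {h. h * g i \<in> apery S (g 1) \<and> ord_s g nu (h * g i) = h
                              \<and> card (max_reps g nu (h * g i)) = 1}"

definition gamma_rectangular :: "nat set \<Rightarrow> (nat \<Rightarrow> nat) \<Rightarrow> nat \<Rightarrow> bool" where
  "gamma_rectangular S g nu \<longleftrightarrow>
     apery S (g 1) = {(\<Sum>i=2..nu. l i * g i) | l. \<forall>i\<in>{2..nu}. l i \<le> gamma S g nu i}"

end

theory Submission
  imports Defs "HOL-Library.FuncSet" Complex_Main
begin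

text \<open>By \<gamma>-rectangularity every Apery element is val l for some l in the box
  B = \<Prod>i\<ge>2. [0, \<gamma> i], and val is injective on B: weigh representations first by length,
  then by their second moment \<Sum> l i * g i^2. The maximality of each \<gamma> i makes the top corner
  of B the unique heaviest representation of the largest Apery element, and two colliding
  vectors of B could be exchanged against it. Hence, with m = g 1,
  \<Sum>w\<in>Ap. z^w = \<Prod>i\<ge>2. \<Sum>h\<le>\<gamma> i. z^(h * g i); for a primitive e-th root of unity with
  e dvd m the left side vanishes, so e divides some (\<gamma> j + 1) * g j.

  This selects the generators one at a time. If C is the set selected so far, with
  m = (\<Prod>c\<in>C. \<gamma> c + 1) * e and e dividing every g c for c in C, then the Apery elements
  supported on C realise every multiple of e as a residue modulo m. So the next selected
  (\<gamma> j + 1) * g j is congruent to one of them, which is a relation involving g 1 and the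
  earlier generators only; the invariant continues with e replaced by gcd e (g j).
  Ordering the generators by selection makes the relations triangular.\<close>

lemma power_eq_power_mod:
  fixes z :: "'a::monoid_mult"
  assumes "z ^ q = 1"
  shows "z ^ n = z ^ (n mod q)"
proof -
  have "z ^ n = (z ^ q) ^ (n div q) * z ^ (n mod q)"
    by (metis div_mult_mod_eq power_add power_mult mult.commute)
  with assms show ?thesis by simp
qed

lemma cis_power_eq_1_iff:
  fixes e n :: nat
  assumes "0 < e"
  shows "cis (2 * pi / e) ^ n = 1 \<longleftrightarrow> e dvd n"
proof -
  have "cis x = 1 \<longleftrightarrow> cos x = 1" for x
    using cos_one_sin_zero by (auto simp: complex_eq_iff)
  then have "cis (2 * pi / e) ^ n = 1 \<longleftrightarrow> cos (real n * (2 * pi / e)) = 1"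
    by (simp add: DeMoivre)
  also have "\<dots> \<longleftrightarrow> (\<exists>k::int. real n * (2 * pi / e) = of_int k * 2 * pi)"
    by (rule cos_one_2pi_int)
  also have "\<dots> \<longleftrightarrow> (\<exists>k::int. int n = k * int e)"
    using assms by (auto simp: field_simps) (metis of_int_eq_iff of_int_mult of_int_of_nat_eq)+
  also have "\<dots> \<longleftrightarrow> e dvd n"
    by (metis dvd_def int_dvd_int_iff mult.commute)
  finally show ?thesis .
qed

definition bounded_funs :: "nat set \<Rightarrow> (nat \<Rightarrow> nat) \<Rightarrow> (nat \<Rightarrow> nat) set" where
  "bounded_funs C b = {l. \<forall>i. l i \<le> (if i \<in> C then b i else 0)}"

lemma bounded_funsD:
  assumes "l \<in> bounded_funs C b"
  shows "i \<in> C \<Longrightarrow> l i \<le> b i" and "i \<notin> C \<Longrightarrow> l i = 0"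
  using assms[unfolded bounded_funs_def, THEN CollectD, THEN spec[of _ i]] by auto

lemma bounded_funsI:
  "(\<And>i. i \<in> C \<Longrightarrow> l i \<le> b i) \<Longrightarrow> (\<And>i. i \<notin> C \<Longrightarrow> l i = 0) \<Longrightarrow> l \<in> bounded_funs C b"
  unfolding bounded_funs_def by simp

lemma bounded_funs_mono:
  assumes "C \<subseteq> D"
  shows "bounded_funs C b \<subseteq> bounded_funs D b"
proof
  fix l assume l: "l \<in> bounded_funs C b"
  show "l \<in> bounded_funs D b"
  proof (rule bounded_funsI)
    fix i show "l i \<le> b i" if "i \<in> D"
      using bounded_funsD[OF l, of i] by (cases "i \<in> C") auto
    show "l i = 0" if "i \<notin> D"
      using that assms bounded_funsD(2)[OF l, of i] by auto
  qed
qed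

lemma bounded_funs_eq_image:
  "bounded_funs C b = (\<lambda>p i. if i \<in> C then p i else 0) ` (PiE C (\<lambda>i. {..b i}))"
proof (intro equalityI subsetI)
  fix l assume l: "l \<in> bounded_funs C b"
  have "l i = (if i \<in> C then restrict l C i else 0)" for i
    using bounded_funsD[OF l] by (cases "i \<in> C") auto
  then have "l = (\<lambda>i. if i \<in> C then restrict l C i else 0)" by blast
  moreover have "restrict l C \<in> PiE C (\<lambda>i. {..b i})"
    using l unfolding bounded_funs_def by (auto simp: PiE_def extensional_def) (metis)
  ultimately show "l \<in> (\<lambda>p i. if i \<in> C then p i else 0) ` PiE C (\<lambda>i. {..b i})" by blast
qed (auto simp: bounded_funs_def)

lemma inj_on_zero_extension: "inj_on (\<lambda>p i. if i \<in> C then p i else 0) (PiE C A)"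
  by (rule inj_onI) (metis (no_types, lifting) PiE_ext)

lemma card_bounded_funs: "finite C \<Longrightarrow> card (bounded_funs C b) = (\<Prod>i\<in>C. b i + 1)"
  unfolding bounded_funs_eq_image by (simp add: card_image[OF inj_on_zero_extension] card_PiE)

lemma finite_bounded_funs: "finite C \<Longrightarrow> finite (bounded_funs C b)"
  unfolding bounded_funs_eq_image by (simp add: finite_PiE)

lemma sum_prod_bounded_funs:
  fixes f :: "nat \<Rightarrow> nat \<Rightarrow> 'a::comm_semiring_1"
  assumes "finite C"
  shows "(\<Sum>l\<in>bounded_funs C b. \<Prod>i\<in>C. f i (l i)) = (\<Prod>i\<in>C. \<Sum>h\<le>b i. f i h)"
proof -
  have "(\<Sum>l\<in>bounded_funs C b. \<Prod>i\<in>C. f i (l i)) = (\<Sum>p\<in>PiE C (\<lambda>i. {..b i}). \<Prod>i\<in>C. f i (p i))"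
    unfolding bounded_funs_eq_image
    by (subst sum.reindex[OF inj_on_zero_extension]) (simp cong: prod.cong)
  also have "\<dots> = (\<Prod>i\<in>C. \<Sum>h\<le>b i. f i h)"
    using assms by (rule prod_sum_PiE[symmetric]) simp
  finally show ?thesis .
qed

lemma numerical_semigroup_add:
  "numerical_semigroup S \<Longrightarrow> a \<in> S \<Longrightarrow> b \<in> S \<Longrightarrow> a + b \<in> S"
  unfolding numerical_semigroup_def by blast

lemma numerical_semigroup_mult:
  assumes "numerical_semigroup S" "m \<in> S"
  shows "k * m \<in> S"
proof (induction k)
  case 0
  then show ?case using assms(1) unfolding numerical_semigroup_def by simp
next
  case (Suc k)
  then show ?case using numerical_semigroup_add[OF assms(1) assms(2)] by simp
qed

lemma apery_summand:
  assumes "numerical_semigroup S" "a + b \<in> apery S m" "a \<in> S" "b \<in> S"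
  shows "a \<in> apery S m"
  using assms numerical_semigroup_add[OF assms(1), of "a - m" b]
  unfolding apery_def by (auto simp: add.commute)

lemma apery_le:
  assumes S: "numerical_semigroup S" "m \<in> S"
    and w: "w \<in> apery S m" and s: "s \<in> S" "s mod m = w mod m"
  shows "w \<le> s"
proof (rule ccontr)
  assume "\<not> w \<le> s"
  moreover have "m dvd w - s"
    using \<open>\<not> w \<le> s\<close> s(2) mod_eq_dvd_iff_nat[of s w m] by simp
  then obtain k where "w - s = m * k" by (elim dvdE)
  with \<open>\<not> w \<le> s\<close> have k: "w = s + m * k" "k \<noteq> 0"
    by (simp, metis diff_is_0_eq mult_0_right)
  then have "w - m = s + (k - 1) * m"
    by (cases k) (simp_all add: algebra_simps)
  then have "w - m \<in> S"
    using numerical_semigroup_add[OF S(1) s(1) numerical_semigroup_mult[OF S]] by simp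
  moreover have "m \<le> w" using k by (cases k) auto
  ultimately show False using w unfolding apery_def by simp
qed

lemma apery_mod_bij:
  assumes S: "numerical_semigroup S" "m \<in> S" and m: "0 < m"
  shows "bij_betw (\<lambda>w. w mod m) (apery S m) {..<m}"
proof (rule bij_betwI')
  fix x y assume x: "x \<in> apery S m" and y: "y \<in> apery S m"
  then have "x \<in> S" "y \<in> S" unfolding apery_def by auto
  then show "(x mod m = y mod m) = (x = y)"
    using apery_le[OF S x \<open>y \<in> S\<close>] apery_le[OF S y \<open>x \<in> S\<close>] by auto
next
  fix x show "x mod m \<in> {..<m}" using m by simp
next
  fix r assume "r \<in> {..<m}"
  then have r: "r < m" by simp
  obtain k where k: "UNIV - S \<subseteq> {..<k}"
    using S(1) unfolding numerical_semigroup_def finite_nat_set_iff_bounded by (auto simp: subset_eq)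
  have "k \<le> k * m + r" using m by (simp add: trans_le_add1)
  then have "k * m + r \<in> S" using k by fastforce
  moreover have "(k * m + r) mod m = r" using r by simp
  ultimately have ex: "\<exists>x. x \<in> S \<and> x mod m = r" by blast
  define w where "w = (LEAST x. x \<in> S \<and> x mod m = r)"
  have w: "w \<in> S" "w mod m = r"
    unfolding w_def using LeastI_ex[OF ex] by auto
  have "\<not> (m \<le> w \<and> w - m \<in> S)"
  proof
    assume h: "m \<le> w \<and> w - m \<in> S"
    then have "(w - m) mod m = r" using w le_mod_geq by simp
    then have "w \<le> w - m" using h unfolding w_def by (intro Least_le) simp
    with h m show False by linarith
  qed
  with w show "\<exists>x\<in>apery S m. r = x mod m" unfolding apery_def by auto
qed

lemma sum_power_apery:
  fixes z :: "'a::field"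
  assumes "numerical_semigroup S" "m \<in> S" "0 < m" and z: "z ^ m = 1" "z \<noteq> 1"
  shows "(\<Sum>w\<in>apery S m. z ^ w) = 0"
proof -
  have "(\<Sum>w\<in>apery S m. z ^ w) = (\<Sum>w\<in>apery S m. z ^ (w mod m))"
    using power_eq_power_mod[OF z(1)] by simp
  also have "\<dots> = (\<Sum>r<m. z ^ r)"
    by (rule sum.reindex_bij_betw[OF apery_mod_bij[OF assms(1-3)]])
  also have "\<dots> = 0"
    using geometric_sum[OF z(2), of m] z(1) by simp
  finally show ?thesis .
qed

definition lincomb :: "nat \<Rightarrow> (nat \<Rightarrow> nat) \<Rightarrow> (nat \<Rightarrow> nat) \<Rightarrow> nat" where
  "lincomb nu h l = (\<Sum>i=1..nu. l i * h i)"

definition unit_vec :: "nat \<Rightarrow> nat \<Rightarrow> nat \<Rightarrow> nat" where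
  "unit_vec j c = (\<lambda>i. if i = j then c else 0)"

lemma lincomb_add: "lincomb nu h (\<lambda>i. a i + b i) = lincomb nu h a + lincomb nu h b"
  unfolding lincomb_def by (simp add: algebra_simps sum.distrib)

lemma lincomb_diff:
  assumes "\<And>i. b i \<le> a i"
  shows "lincomb nu h (\<lambda>i. a i - b i) = lincomb nu h a - lincomb nu h b"
  using lincomb_add[of nu h "\<lambda>i. a i - b i" b] assms by simp

lemma lincomb_mono: "(\<And>i. b i \<le> a i) \<Longrightarrow> lincomb nu h b \<le> lincomb nu h a"
  unfolding lincomb_def by (intro sum_mono mult_le_mono1)

lemma lincomb_unit_vec: "j \<in> {1..nu} \<Longrightarrow> lincomb nu h (unit_vec j c) = c * h j"
proof -
  assume "j \<in> {1..nu}"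
  have "lincomb nu h (unit_vec j c) = (\<Sum>i=1..nu. if i = j then c * h j else 0)"
    unfolding lincomb_def unit_vec_def by (rule sum.cong) auto
  with \<open>j \<in> {1..nu}\<close> show ?thesis by simp
qed

lemma unit_vec_coeffs: "j \<in> {1..nu} \<Longrightarrow> unit_vec j c \<in> coeffs nu"
  unfolding coeffs_def unit_vec_def by auto

lemma coeffs_add: "a \<in> coeffs nu \<Longrightarrow> b \<in> coeffs nu \<Longrightarrow> (\<lambda>i. a i + b i) \<in> coeffs nu"
  unfolding coeffs_def by auto

lemma coeffs_diff: "a \<in> coeffs nu \<Longrightarrow> (\<lambda>i. a i - b i) \<in> coeffs nu"
  unfolding coeffs_def by auto

lemma reps_iff: "l \<in> reps g nu s \<longleftrightarrow> l \<in> coeffs nu \<and> lincomb nu g l = s"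
  unfolding reps_def lincomb_def by auto

locale min_generated_numerical_semigroup =
  fixes S :: "nat set" and g :: "nat \<Rightarrow> nat" and nu :: nat
  assumes numerical: "numerical_semigroup S" and gens: "min_gens S g nu"
begin

abbreviation val :: "(nat \<Rightarrow> nat) \<Rightarrow> nat" where
  "val \<equiv> lincomb nu g"

lemma mem_iff: "s \<in> S \<longleftrightarrow> (\<exists>l\<in>coeffs nu. s = val l)"
  using gens unfolding min_gens_def reps_def lincomb_def by auto

lemma val_mem: "l \<in> coeffs nu \<Longrightarrow> val l \<in> S"
  using mem_iff by blast

lemma nu_pos: "1 \<le> nu"
proof (rule ccontr)
  assume "\<not> 1 \<le> nu"
  then have "S \<subseteq> {0}" using mem_iff by (auto simp: lincomb_def)
  then have "UNIV - {0} \<subseteq> UNIV - S" by auto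
  moreover have "finite (UNIV - S)" using numerical unfolding numerical_semigroup_def by simp
  ultimately have "finite (UNIV - {0::nat})" by (rule finite_subset)
  then show False by simp
qed

lemma g_less: "i \<in> {1..nu} \<Longrightarrow> j \<in> {1..nu} \<Longrightarrow> i < j \<Longrightarrow> g i < g j"
  using gens unfolding min_gens_def by blast

lemma g_inj: "i \<in> {1..nu} \<Longrightarrow> j \<in> {1..nu} \<Longrightarrow> i \<noteq> j \<Longrightarrow> g i \<noteq> g j"
  using g_less by (metis less_irrefl linorder_neqE_nat)

lemma g1_pos: "0 < g 1"
proof (rule ccontr)
  assume "\<not> 0 < g 1"
  then have "\<exists>l\<in>coeffs nu. l 1 = 0 \<and> g 1 = (\<Sum>i=1..nu. l i * g i)"
    by (intro bexI[of _ "\<lambda>_. 0"]) (simp_all add: coeffs_def)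
  moreover have "1 \<in> {1..nu}" using nu_pos by simp
  ultimately show False using gens unfolding min_gens_def by blast
qed

lemma g_pos: "i \<in> {1..nu} \<Longrightarrow> 0 < g i"
  using g_less[of 1 i] g1_pos nu_pos by (cases "i = 1") auto

lemma mult_gen_mem: "i \<in> {1..nu} \<Longrightarrow> c * g i \<in> S"
  using val_mem[OF unit_vec_coeffs[of i nu c]] by (simp only: lincomb_unit_vec)

lemma g1_mem: "g 1 \<in> S"
  using mult_gen_mem[of 1 1] nu_pos by simp

lemma coeff_le_val: "l \<in> coeffs nu \<Longrightarrow> l i \<le> val l"
proof (cases "i \<in> {1..nu}")
  case True
  then have "l i \<le> l i * g i" using g_pos[OF True] by simp
  also have "\<dots> \<le> val l" unfolding lincomb_def using True by (intro member_le_sum) auto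
  finally show ?thesis .
qed (simp add: coeffs_def)

lemma val_eq_0_iff:
  assumes "l \<in> coeffs nu"
  shows "val l = 0 \<longleftrightarrow> l = (\<lambda>_. 0)"
proof
  assume "val l = 0"
  then have zero: "l i * g i = 0" if "i \<in> {1..nu}" for i
    using that unfolding lincomb_def by simp
  have "l i = 0" for i
    using g_pos[of i] zero[of i] assms unfolding coeffs_def by (cases "i \<in> {1..nu}") auto
  then show "l = (\<lambda>_. 0)" by blast
qed (simp add: lincomb_def)

lemma val_eq_imp_eq:
  assumes "\<And>i. a i \<le> b i" "b \<in> coeffs nu" "val a = val b"
  shows "a = b"
proof -
  have "val (\<lambda>i. b i - a i) = 0" using lincomb_diff[of a b] assms by simp
  then have "(\<lambda>i. b i - a i) = (\<lambda>_. 0)"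
    using val_eq_0_iff[OF coeffs_diff[OF assms(2), of a]] by simp
  then have "b i \<le> a i" for i using fun_cong[of _ _ i] by fastforce
  with assms(1) show ?thesis by (intro ext le_antisym)
qed

lemma apery_sub_rep:
  assumes w: "val r \<in> apery S (g 1)" and r: "r \<in> coeffs nu" and le: "\<And>i. e i \<le> r i"
  shows "val e \<in> apery S (g 1)"
proof (rule apery_summand[OF numerical])
  have "val r = val e + val (\<lambda>i. r i - e i)"
    using lincomb_diff[of e r, OF le] lincomb_mono[of e r, OF le] by simp
  with w show "val e + val (\<lambda>i. r i - e i) \<in> apery S (g 1)" by simp
  have "e \<in> coeffs nu"
    unfolding coeffs_def
  proof (intro CollectI allI impI)
    fix i assume "i \<notin> {1..nu}"
    with r have "r i = 0" unfolding coeffs_def by simp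
    with le[of i] show "e i = 0" by simp
  qed
  then show "val e \<in> S" by (rule val_mem)
  show "val (\<lambda>i. r i - e i) \<in> S" using r by (intro val_mem coeffs_diff)
qed

lemma finite_reps: "finite (reps g nu s)"
proof (rule finite_subset)
  show "reps g nu s \<subseteq> bounded_funs {1..nu} (\<lambda>_. s)"
  proof
    fix l assume "l \<in> reps g nu s"
    then have l: "l \<in> coeffs nu" "val l = s" by (simp_all add: reps_iff)
    have "l i \<le> (if i \<in> {1..nu} then s else 0)" for i
      using coeff_le_val[OF l(1), of i] l unfolding coeffs_def by auto
    then show "l \<in> bounded_funs {1..nu} (\<lambda>_. s)"
      unfolding bounded_funs_def by blast
  qed
qed (simp add: finite_bounded_funs)

lemma val_split: "val l = l 1 * g 1 + (\<Sum>i=2..nu. l i * g i)"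
  unfolding lincomb_def using nu_pos by (simp add: sum.atLeast_Suc_atMost numeral_2_eq_2)

lemma second_moment_gt:
  assumes d: "d \<in> coeffs nu" "val d = c * g l" "(\<Sum>i=1..nu. d i) = c" "d \<noteq> unit_vec l c"
    and l: "l \<in> {1..nu}"
  shows "c * g l ^ 2 < (\<Sum>i=1..nu. d i * g i ^ 2)"
proof -
  have "\<exists>i\<in>{1..nu}. i \<noteq> l \<and> d i \<noteq> 0"
  proof (rule ccontr)
    assume "\<not> ?thesis"
    then have z: "\<forall>i\<in>{1..nu}. i \<noteq> l \<longrightarrow> d i = 0" by blast
    then have "(\<Sum>i=1..nu. d i) = d l"
      by (subst sum.remove[OF _ l]) (simp_all add: sum.neutral)
    with d(1,3) z have "d = unit_vec l c"
      unfolding unit_vec_def coeffs_def by fastforce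
    with d(4) show False ..
  qed
  then obtain i where i: "i \<in> {1..nu}" "i \<noteq> l" "d i \<noteq> 0" by blast
  have pos: "0 < (\<Sum>j=1..nu. int (d j) * (int (g j) - int (g l))^2)"
  proof (rule sum_pos2[OF _ i(1)])
    show "0 < int (d i) * (int (g i) - int (g l))^2"
      using i g_inj[OF i(1) l i(2)] by simp
  qed simp_all
  have expand: "(\<Sum>j=1..nu. int (d j) * (int (g j) - int (g l))^2)
      = int (\<Sum>j=1..nu. d j * g j ^ 2) - 2 * int (g l) * int (val d)
        + int (g l)^2 * int (\<Sum>j=1..nu. d j)"
    unfolding lincomb_def
    by (simp add: power2_eq_square algebra_simps sum.distrib sum_subtractf sum_distrib_left)
  have "int (c * g l ^ 2) < int (\<Sum>j=1..nu. d j * g j ^ 2)"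
    using pos unfolding expand d(2,3) by (simp add: power2_eq_square algebra_simps)
  then show ?thesis by linarith
qed

end

locale gamma_rectangular_semigroup = min_generated_numerical_semigroup +
  assumes rectangular: "gamma_rectangular S g nu"
begin

abbreviation \<gamma> :: "nat \<Rightarrow> nat" where
  "\<gamma> \<equiv> gamma S g nu"

abbreviation box_on :: "nat set \<Rightarrow> (nat \<Rightarrow> nat) set" where
  "box_on C \<equiv> bounded_funs C \<gamma>"

abbreviation box :: "(nat \<Rightarrow> nat) set" where
  "box \<equiv> box_on {2..nu}"

lemma box_on_coeffs:
  assumes "C \<subseteq> {2..nu}" "l \<in> box_on C"
  shows "l \<in> coeffs nu"
  unfolding coeffs_def
proof (intro CollectI allI impI)
  fix i assume "i \<notin> {1..nu}"
  with assms(1) have "i \<notin> C" by auto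
  with assms(2) show "l i = 0" by (rule bounded_funsD(2))
qed

lemma val_box: "l \<in> box \<Longrightarrow> val l = (\<Sum>i=2..nu. l i * g i)"
  using bounded_funsD(2)[of l "{2..nu}" \<gamma> 1] by (simp add: val_split)

lemma apery_eq_val_box: "apery S (g 1) = val ` box"
proof -
  have "apery S (g 1) = {(\<Sum>i=2..nu. l i * g i) | l. \<forall>i\<in>{2..nu}. l i \<le> \<gamma> i}"
    using rectangular unfolding gamma_rectangular_def .
  also have "\<dots> = val ` box"
  proof (intro equalityI subsetI)
    fix x assume "x \<in> {(\<Sum>i=2..nu. l i * g i) | l. \<forall>i\<in>{2..nu}. l i \<le> \<gamma> i}"
    then obtain l where x: "x = (\<Sum>i=2..nu. l i * g i)" and l: "\<forall>i\<in>{2..nu}. l i \<le> \<gamma> i"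
      by auto
    define k where "k = (\<lambda>i. if i \<in> {2..nu} then l i else 0)"
    have k: "k \<in> box" using l unfolding k_def by (intro bounded_funsI) auto
    have "val k = (\<Sum>i=2..nu. k i * g i)" by (rule val_box[OF k])
    then have "val k = x" unfolding x k_def by simp
    with k show "x \<in> val ` box" by blast
  next
    fix x assume "x \<in> val ` box"
    then obtain l where l: "l \<in> box" and x: "x = val l" by (rule imageE)
    then have "\<forall>i\<in>{2..nu}. l i \<le> \<gamma> i" using bounded_funsD(1) by blast
    with val_box[OF l] x
    show "x \<in> {(\<Sum>i=2..nu. l i * g i) | l. \<forall>i\<in>{2..nu}. l i \<le> \<gamma> i}" by auto
  qed
  finally show ?thesis .
qed

definition top_vec :: "nat \<Rightarrow> nat" where
  "top_vec = (\<lambda>i. if i \<in> {2..nu} then \<gamma> i else 0)"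

lemma top_vec_box: "top_vec \<in> box"
  unfolding top_vec_def by (intro bounded_funsI) auto

lemma box_le_top_vec: "l \<in> box \<Longrightarrow> l i \<le> top_vec i"
  unfolding top_vec_def using bounded_funsD[of l "{2..nu}" \<gamma> i] by auto

lemma val_top_vec_apery: "val top_vec \<in> apery S (g 1)"
  using apery_eq_val_box top_vec_box by simp

lemma apery_le_val_top_vec:
  assumes "w \<in> apery S (g 1)"
  shows "w \<le> val top_vec"
proof -
  obtain l where "l \<in> box" "w = val l"
    using assms unfolding apery_eq_val_box by (rule imageE)
  then show ?thesis by (simp add: lincomb_mono box_le_top_vec)
qed

lemma gamma_succ_not_unique:
  assumes l: "l \<in> {2..nu}" and x: "(\<gamma> l + 1) * g l \<in> apery S (g 1)"
  shows "ord_s g nu ((\<gamma> l + 1) * g l) \<noteq> \<gamma> l + 1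
    \<or> card (max_reps g nu ((\<gamma> l + 1) * g l)) \<noteq> 1"
proof (rule ccontr)
  let ?G = "{h. h * g l \<in> apery S (g 1) \<and> ord_s g nu (h * g l) = h
                \<and> card (max_reps g nu (h * g l)) = 1}"
  assume "\<not> ?thesis"
  with x have "\<gamma> l + 1 \<in> ?G" by simp
  moreover have "?G \<subseteq> {..val top_vec}"
  proof
    fix h assume "h \<in> ?G"
    have "h \<le> h * g l" using g_pos[of l] l by simp
    also have "\<dots> \<le> val top_vec" using \<open>h \<in> ?G\<close> apery_le_val_top_vec by blast
    finally show "h \<in> {..val top_vec}" by simp
  qed
  then have "finite ?G" by (rule finite_subset) simp
  ultimately have "\<gamma> l + 1 \<le> Max ?G" by (intro Max_ge)
  then show False unfolding gamma_def by simp
qed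

text \<open>The length factor exceeds every second moment that matters, so weights compare
  representations by length first.\<close>

definition weight :: "(nat \<Rightarrow> nat) \<Rightarrow> nat" where
  "weight = lincomb nu (\<lambda>i. val top_vec ^ 2 + 1 + g i ^ 2)"

lemma weight_eq:
  "weight l = (val top_vec ^ 2 + 1) * (\<Sum>i=1..nu. l i) + (\<Sum>i=1..nu. l i * g i ^ 2)"
  unfolding weight_def lincomb_def[of nu _ l] by (simp add: algebra_simps sum.distrib sum_distrib_right)

lemma weight_add: "weight (\<lambda>i. a i + b i) = weight a + weight b"
  unfolding weight_def by (rule lincomb_add)

lemma weight_split: "(\<And>i. b i \<le> a i) \<Longrightarrow> weight a = weight (\<lambda>i. a i - b i) + weight b"
  using weight_add[of "\<lambda>i. a i - b i" b] by simp

lemma exists_heavier_rep: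
  assumes l: "l \<in> {2..nu}" and x: "(\<gamma> l + 1) * g l \<in> apery S (g 1)"
  shows "\<exists>d\<in>coeffs nu. val d = (\<gamma> l + 1) * g l \<and> weight (unit_vec l (\<gamma> l + 1)) < weight d"
proof -
  let ?c = "\<gamma> l + 1"
  let ?x = "?c * g l"
  let ?e = "unit_vec l ?c"
  let ?K = "val top_vec ^ 2 + 1"
  have l1: "l \<in> {1..nu}" using l by simp
  have e: "?e \<in> reps g nu ?x"
    using unit_vec_coeffs[OF l1] lincomb_unit_vec[OF l1] by (simp add: reps_iff)
  have length_e: "(\<Sum>i=1..nu. ?e i) = ?c"
    using lincomb_unit_vec[OF l1, of "\<lambda>_. 1" ?c] by (simp add: lincomb_def)
  have weight_e: "weight ?e = ?c * ?K + ?c * g l ^ 2"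
    unfolding weight_def lincomb_unit_vec[OF l1] by (simp add: algebra_simps)
  have moment_e: "?c * g l ^ 2 < ?K"
  proof -
    have "?c * g l ^ 2 = ?x * g l" by (simp add: power2_eq_square algebra_simps)
    also have "\<dots> \<le> val top_vec * val top_vec"
      using apery_le_val_top_vec[OF x] by (intro mult_le_mono) simp_all
    finally show ?thesis by (simp add: power2_eq_square)
  qed
  let ?T = "(\<lambda>d. \<Sum>i=1..nu. d i) ` reps g nu ?x"
  have T: "finite ?T" "?T \<noteq> {}" using finite_reps e by auto
  have ord_ge: "?c \<le> ord_s g nu ?x"
    unfolding ord_s_def using e length_e T(1) by (metis Max_ge image_eqI)
  have "\<exists>d\<in>max_reps g nu ?x. d \<noteq> ?e"
  proof (cases "ord_s g nu ?x = ?c")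
    case True
    then have e_max: "?e \<in> max_reps g nu ?x" using e length_e unfolding max_reps_def by simp
    show ?thesis
    proof (rule ccontr)
      assume "\<not> ?thesis"
      with e_max have "max_reps g nu ?x = {?e}" by blast
      with gamma_succ_not_unique[OF l x] True show False by simp
    qed
  next
    case False
    obtain d where "d \<in> reps g nu ?x" "(\<Sum>i=1..nu. d i) = ord_s g nu ?x"
      using Max_in[OF T] unfolding ord_s_def by auto
    with False length_e show ?thesis unfolding max_reps_def by auto
  qed
  then obtain d where d: "d \<in> reps g nu ?x" "(\<Sum>i=1..nu. d i) = ord_s g nu ?x" "d \<noteq> ?e"
    unfolding max_reps_def by blast
  have "weight ?e < weight d"
  proof (cases "(\<Sum>i=1..nu. d i) = ?c")
    case True
    with d have "?c * g l ^ 2 < (\<Sum>i=1..nu. d i * g i ^ 2)"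
      by (intro second_moment_gt[OF _ _ _ _ l1]) (simp_all add: reps_iff)
    with True show ?thesis unfolding weight_e weight_eq[of d] by simp
  next
    case False
    with d(2) ord_ge have "?c + 1 \<le> (\<Sum>i=1..nu. d i)" by simp
    then have "?K * (?c + 1) \<le> ?K * (\<Sum>i=1..nu. d i)" by (rule mult_le_mono2)
    with moment_e show ?thesis unfolding weight_e weight_eq[of d] by (simp add: algebra_simps)
  qed
  with d(1) show ?thesis by (auto simp: reps_iff)
qed

lemma top_vec_coeffs: "top_vec \<in> coeffs nu"
  using box_on_coeffs[OF order_refl top_vec_box] .

lemma heaviest_rep_is_top_vec:
  assumes r: "r \<in> reps g nu (val top_vec)"
    and heaviest: "\<And>t. t \<in> reps g nu (val top_vec) \<Longrightarrow> weight t \<le> weight r"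
  shows "r = top_vec"
proof -
  have rc: "r \<in> coeffs nu" and rv: "val r = val top_vec" using r by (simp_all add: reps_iff)
  have r1: "r 1 = 0"
  proof (rule ccontr)
    assume "r 1 \<noteq> 0"
    then have "val (unit_vec 1 1) \<in> apery S (g 1)"
      using apery_sub_rep[OF _ rc] rv val_top_vec_apery unfolding unit_vec_def by simp
    moreover have "0 \<in> S" using numerical unfolding numerical_semigroup_def by simp
    ultimately show False using lincomb_unit_vec[of 1 nu g 1] nu_pos unfolding apery_def by simp
  qed
  have r_le: "r l \<le> \<gamma> l" if l: "l \<in> {2..nu}" for l
  proof (rule ccontr)
    assume "\<not> r l \<le> \<gamma> l"
    let ?e = "unit_vec l (\<gamma> l + 1)"
    let ?x = "(\<gamma> l + 1) * g l"
    have l1: "l \<in> {1..nu}" using l by simp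
    have le: "?e i \<le> r i" for i using \<open>\<not> r l \<le> \<gamma> l\<close> unfolding unit_vec_def by simp
    have rest: "val (\<lambda>i. r i - ?e i) = val top_vec - ?x"
      using lincomb_diff[OF le] lincomb_unit_vec[OF l1] rv by simp
    have x_le: "?x \<le> val top_vec"
      using lincomb_mono[of ?e r nu g, OF le] lincomb_unit_vec[OF l1] rv by simp
    have "?x \<in> apery S (g 1)"
      using apery_sub_rep[OF _ rc le] rv val_top_vec_apery lincomb_unit_vec[OF l1] by simp
    then obtain d where d: "d \<in> coeffs nu" "val d = ?x" "weight ?e < weight d"
      using exists_heavier_rep[OF l] by blast
    have "(\<lambda>i. (r i - ?e i) + d i) \<in> reps g nu (val top_vec)"
      using coeffs_add[OF coeffs_diff[OF rc] d(1)] lincomb_add[of nu g _ d] rest d(2) x_le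
      by (simp add: reps_iff)
    then have "weight (\<lambda>i. (r i - ?e i) + d i) \<le> weight r" by (rule heaviest)
    with d(3) show False unfolding weight_add weight_split[of ?e r, OF le] by simp
  qed
  have "r \<in> box"
  proof (rule bounded_funsI)
    show "r i = 0" if "i \<notin> {2..nu}" for i
      using that r1 rc unfolding coeffs_def by (cases "i = 1") auto
  qed (rule r_le)
  then have "r i \<le> top_vec i" for i by (rule box_le_top_vec)
  then show ?thesis using val_eq_imp_eq top_vec_coeffs rv by blast
qed

lemma weight_lt_top_vec:
  assumes t: "t \<in> reps g nu (val top_vec)" "t \<noteq> top_vec"
  shows "weight t < weight top_vec"
proof -
  let ?R = "reps g nu (val top_vec)"
  have top: "top_vec \<in> ?R" using top_vec_coeffs by (simp add: reps_iff)
  have fin: "finite (weight ` ?R)" using finite_reps by simp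
  have "Max (weight ` ?R) \<in> weight ` ?R" using Max_in[OF fin] top by blast
  then obtain r where r: "Max (weight ` ?R) = weight r" "r \<in> ?R" by (rule imageE)
  have heaviest: "weight s \<le> weight r" if "s \<in> ?R" for s
    using that r(1) Max_ge[OF fin] by simp
  then have "r = top_vec" by (rule heaviest_rep_is_top_vec[OF r(2)])
  show ?thesis
  proof (rule ccontr)
    assume "\<not> ?thesis"
    then have "weight s \<le> weight t" if "s \<in> ?R" for s
      using heaviest[OF that] \<open>r = top_vec\<close> by simp
    then have "t = top_vec" by (rule heaviest_rep_is_top_vec[OF t(1)])
    with t(2) show False ..
  qed
qed

lemma exchange_rep:
  assumes a: "a \<in> box" and b: "b \<in> box" and eq: "val a = val b"
  shows "(\<lambda>i. (top_vec i - a i) + b i) \<in> reps g nu (val top_vec)"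
proof -
  have le: "a i \<le> top_vec i" for i using box_le_top_vec[OF a] .
  have "val (\<lambda>i. (top_vec i - a i) + b i) = val (\<lambda>i. top_vec i - a i) + val b"
    by (rule lincomb_add)
  also have "val (\<lambda>i. top_vec i - a i) = val top_vec - val a"
    using le by (rule lincomb_diff)
  also have "val a \<le> val top_vec" using le by (rule lincomb_mono)
  then have "val top_vec - val a + val b = val top_vec" using eq by simp
  finally show ?thesis
    using coeffs_add[OF coeffs_diff[OF top_vec_coeffs, of a] box_on_coeffs[OF order_refl b]]
    by (simp add: reps_iff)
qed

lemma inj_on_val_box: "inj_on val box"
proof (rule inj_onI)
  fix a b assume a: "a \<in> box" and b: "b \<in> box" and eq: "val a = val b"
  let ?t = "\<lambda>i. (top_vec i - a i) + b i"
  let ?t' = "\<lambda>i. (top_vec i - b i) + a i"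
  have le: "a i \<le> top_vec i" "b i \<le> top_vec i" for i
    using box_le_top_vec a b by auto
  have t: "?t \<in> reps g nu (val top_vec)" using a b eq by (rule exchange_rep)
  have t': "?t' \<in> reps g nu (val top_vec)" using b a eq[symmetric] by (rule exchange_rep)
  have "weight ?t + weight ?t' = weight (\<lambda>i. ?t i + ?t' i)" by (rule weight_add[symmetric])
  also have "(\<lambda>i. ?t i + ?t' i) = (\<lambda>i. top_vec i + top_vec i)"
  proof
    fix i show "?t i + ?t' i = top_vec i + top_vec i" using le(1)[of i] le(2)[of i] by arith
  qed
  finally have "weight ?t + weight ?t' = weight top_vec + weight top_vec" by (simp add: weight_add)
  moreover have "weight ?t' \<le> weight top_vec"
    using weight_lt_top_vec[OF t'] by (cases "?t' = top_vec") auto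
  ultimately have "\<not> weight ?t < weight top_vec" by linarith
  then have "?t = top_vec" using weight_lt_top_vec[OF t] by blast
  then show "a = b"
  proof (intro ext)
    fix i show "a i = b i" using fun_cong[OF \<open>?t = top_vec\<close>, of i] le(1)[of i] by arith
  qed
qed

lemma apery_generating_function:
  fixes z :: "'a::comm_ring_1"
  shows "(\<Sum>w\<in>apery S (g 1). z ^ w) = (\<Prod>i\<in>{2..nu}. \<Sum>h\<le>\<gamma> i. z ^ (h * g i))"
proof -
  have "(\<Sum>w\<in>apery S (g 1). z ^ w) = (\<Sum>l\<in>box. z ^ val l)"
    unfolding apery_eq_val_box by (rule sum.reindex[OF inj_on_val_box, unfolded comp_def])
  also have "\<dots> = (\<Sum>l\<in>box. \<Prod>i\<in>{2..nu}. z ^ (l i * g i))"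
    by (rule sum.cong[OF refl]) (simp add: val_box power_sum)
  also have "\<dots> = (\<Prod>i\<in>{2..nu}. \<Sum>h\<le>\<gamma> i. z ^ (h * g i))"
    by (rule sum_prod_bounded_funs) simp
  finally show ?thesis .
qed

lemma exists_gamma_succ_dvd:
  assumes e: "2 \<le> e" "e dvd g 1" and C: "\<And>c. c \<in> C \<Longrightarrow> e dvd g c"
  shows "\<exists>j\<in>{2..nu} - C. e dvd (\<gamma> j + 1) * g j"
proof -
  define z where "z = cis (2 * pi / e)"
  have z_pow: "z ^ n = 1 \<longleftrightarrow> e dvd n" for n
    unfolding z_def using e(1) by (intro cis_power_eq_1_iff) simp
  have "z \<noteq> 1" using z_pow[of 1] e(1) by auto
  then have "(\<Sum>w\<in>apery S (g 1). z ^ w) = 0"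
    using sum_power_apery[OF numerical g1_mem g1_pos] z_pow e(2) by blast
  then obtain j where j: "j \<in> {2..nu}" and "(\<Sum>h\<le>\<gamma> j. z ^ (h * g j)) = 0"
    unfolding apery_generating_function by auto
  then have geom: "(\<Sum>h<\<gamma> j + 1. (z ^ g j) ^ h) = 0"
    by (simp add: lessThan_Suc_atMost power_mult[symmetric] mult.commute)
  have zj: "z ^ g j \<noteq> 1"
  proof
    assume "z ^ g j = 1"
    with geom show False using of_nat_neq_0[of "\<gamma> j", where 'a=complex] by simp
  qed
  then have "(z ^ g j) ^ (\<gamma> j + 1) = 1"
    using geom geometric_sum[OF zj, of "\<gamma> j + 1"] by simp
  then have "z ^ ((\<gamma> j + 1) * g j) = 1" by (simp only: power_mult mult.commute)
  then have "e dvd (\<gamma> j + 1) * g j" by (simp only: z_pow)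
  moreover have "j \<notin> C" using C z_pow zj by blast
  ultimately show ?thesis using j by blast
qed

definition admissible :: "nat set \<Rightarrow> nat \<Rightarrow> bool" where
  "admissible C e \<longleftrightarrow> g 1 = (\<Prod>c\<in>C. \<gamma> c + 1) * e \<and> (\<forall>c\<in>C. e dvd g c)"

lemma admissible_pos: "admissible C e \<Longrightarrow> 0 < e"
  using g1_pos unfolding admissible_def by (cases e) auto

lemma dvd_val_box_on:
  assumes l: "l \<in> box_on C" and e: "\<And>c. c \<in> C \<Longrightarrow> e dvd g c"
  shows "e dvd val l"
  unfolding lincomb_def
proof (rule dvd_sum)
  fix i show "e dvd l i * g i"
    using e[of i] bounded_funsD(2)[OF l, of i] by (cases "i \<in> C") auto
qed

lemma inj_on_val_mod_box: "inj_on (\<lambda>l. val l mod g 1) box"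
proof (rule inj_onI)
  fix a b assume a: "a \<in> box" and b: "b \<in> box" and eq: "val a mod g 1 = val b mod g 1"
  have "val a \<in> apery S (g 1)" "val b \<in> apery S (g 1)" using a b apery_eq_val_box by auto
  with eq have "val a = val b"
    using bij_betw_imp_inj_on[OF apery_mod_bij[OF numerical g1_mem g1_pos]] by (auto dest: inj_onD)
  with a b show "a = b" using inj_on_val_box by (auto dest: inj_onD)
qed

text \<open>The box on C has g 1 div e elements, with pairwise distinct residues modulo g 1 that
  are multiples of e; so every multiple of e occurs as such a residue.\<close>
lemma admissible_decomp:
  assumes C: "C \<subseteq> {2..nu}" and adm: "admissible C e" and y: "y \<in> S" "e dvd y"
  shows "\<exists>\<mu>\<in>box_on C. \<exists>q. y = val \<mu> + q * g 1"
proof -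
  let ?D = "\<Prod>c\<in>C. \<gamma> c + 1"
  let ?R = "(\<lambda>l. val l mod g 1) ` box_on C"
  let ?T = "(\<lambda>k. e * k) ` {..<?D}"
  have g1: "g 1 = ?D * e" and e_gen: "\<And>c. c \<in> C \<Longrightarrow> e dvd g c"
    using adm unfolding admissible_def by auto
  have e0: "0 < e" using adm by (rule admissible_pos)
  have e_g1: "e dvd g 1" using g1 by simp
  have mult_of_e: "x \<in> ?T" if "e dvd x" "x < g 1" for x
  proof -
    from \<open>e dvd x\<close> obtain k where "x = e * k" by (elim dvdE)
    moreover from \<open>x < g 1\<close> this g1 e0 have "k < ?D" by (simp add: mult.commute)
    ultimately show ?thesis by blast
  qed
  have "?R \<subseteq> ?T"
  proof
    fix r assume "r \<in> ?R"
    then obtain l where l: "l \<in> box_on C" and r: "r = val l mod g 1" by blast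
    have "e dvd r" unfolding r using dvd_val_box_on[OF l e_gen] e_g1 by (rule dvd_mod)
    with r g1_pos show "r \<in> ?T" by (intro mult_of_e) simp_all
  qed
  moreover have "card ?R = ?D"
    using card_image[OF inj_on_subset[OF inj_on_val_mod_box bounded_funs_mono[OF C]]]
      card_bounded_funs[OF finite_subset[OF C]] by simp
  moreover have "card ?T = ?D" using e0 by (simp add: card_image inj_on_def)
  ultimately have "?R = ?T" by (intro card_subset_eq) simp_all
  moreover have "y mod g 1 \<in> ?T" using dvd_mod[OF y(2) e_g1] g1_pos by (intro mult_of_e) simp_all
  ultimately have "y mod g 1 \<in> ?R" by simp
  then obtain \<mu> where \<mu>: "y mod g 1 = val \<mu> mod g 1" "\<mu> \<in> box_on C" by (rule imageE)
  have "val \<mu> \<in> apery S (g 1)" using \<mu>(2) bounded_funs_mono[OF C] apery_eq_val_box by auto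
  then have "val \<mu> \<le> y" using apery_le[OF numerical g1_mem _ y(1) \<mu>(1)] by simp
  moreover have "g 1 dvd y - val \<mu>" using mod_eq_dvd_iff_nat[OF \<open>val \<mu> \<le> y\<close>] \<mu>(1) by simp
  then obtain q where "y - val \<mu> = g 1 * q" by (elim dvdE)
  ultimately show ?thesis using \<mu>(2) by (intro bexI[of _ \<mu>] exI[of _ q]) (simp_all add: mult.commute)
qed

lemma admissible_not_dvd:
  assumes C: "C \<subseteq> {2..nu}" and adm: "admissible C e" and j: "j \<in> {2..nu} - C"
    and t: "1 \<le> t" "t \<le> \<gamma> j"
  shows "\<not> e dvd t * g j"
proof
  assume "e dvd t * g j"
  have j1: "j \<in> {1..nu}" using j by simp
  obtain \<mu> q where \<mu>: "\<mu> \<in> box_on C" and eq: "t * g j = val \<mu> + q * g 1"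
    using admissible_decomp[OF C adm mult_gen_mem[OF j1] \<open>e dvd t * g j\<close>] by blast
  have u: "unit_vec j t \<in> box" using t j unfolding unit_vec_def by (intro bounded_funsI) auto
  have \<mu>_box: "\<mu> \<in> box" using \<mu> bounded_funs_mono[OF C] by blast
  have "val \<mu> mod g 1 = val (unit_vec j t) mod g 1"
    using eq lincomb_unit_vec[OF j1] by simp
  then have "\<mu> = unit_vec j t" using inj_on_val_mod_box \<mu>_box u by (auto dest: inj_onD)
  moreover have "\<mu> j = 0" using bounded_funsD(2)[OF \<mu>] j by simp
  ultimately show False using t unfolding unit_vec_def by simp
qed

lemma admissible_insert:
  assumes C: "C \<subseteq> {2..nu}" and adm: "admissible C e" and j: "j \<in> {2..nu} - C"
    and e_dvd: "e dvd (\<gamma> j + 1) * g j"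
  shows "admissible (insert j C) (gcd e (g j))"
proof -
  define d where "d = gcd e (g j)"
  have e0: "0 < e" using adm by (rule admissible_pos)
  obtain a where a: "e = d * a" using gcd_dvd1[of e "g j"] unfolding d_def by (elim dvdE)
  obtain b where b: "g j = d * b" using gcd_dvd2[of e "g j"] unfolding d_def by (elim dvdE)
  have d0: "0 < d" unfolding d_def using e0 by simp
  have "a = e div d" "b = g j div d" using a b d0 by simp_all
  then have cop: "coprime a b" using div_gcd_coprime[of e "g j"] e0 unfolding d_def by simp
  have "d * a dvd d * ((\<gamma> j + 1) * b)" using e_dvd a b by (simp add: mult.left_commute)
  then have "a dvd (\<gamma> j + 1) * b" by (rule nat_mult_dvd_cancel1[OF d0, THEN iffD1])
  with cop have "a dvd \<gamma> j + 1" by (simp only: coprime_dvd_mult_left_iff)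
  moreover have "\<not> a \<le> \<gamma> j"
  proof
    assume "a \<le> \<gamma> j"
    moreover have "1 \<le> a" using a e0 by (cases a) auto
    moreover have "e dvd a * g j" using a b by simp
    ultimately show False using admissible_not_dvd[OF C adm j] by blast
  qed
  ultimately have "a = \<gamma> j + 1" by (simp add: dvd_imp_le le_antisym)
  then have "g 1 = (\<Prod>c\<in>insert j C. \<gamma> c + 1) * d"
    using adm a j finite_subset[OF C] unfolding admissible_def by (simp add: algebra_simps)
  moreover have "d dvd g c" if "c \<in> insert j C" for c
    using that adm a b unfolding admissible_def by (auto intro: dvd_trans[of d e])
  ultimately show ?thesis unfolding admissible_def d_def by blast
qed

lemma admissible_extend:
  assumes C: "C \<subseteq> {2..nu}" "C \<noteq> {2..nu}" and adm: "admissible C e"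
  shows "\<exists>j\<in>{2..nu} - C. admissible (insert j C) (gcd e (g j)) \<and>
           (\<exists>l. (\<gamma> j + 1) * g j = val l \<and> (\<forall>t. l t \<noteq> 0 \<longrightarrow> t \<in> insert 1 C))"
proof -
  have "\<exists>j\<in>{2..nu} - C. e dvd (\<gamma> j + 1) * g j"
  proof (cases "e = 1")
    case True
    with C show ?thesis by auto
  next
    case False
    with admissible_pos[OF adm] have "2 \<le> e" by simp
    with adm show ?thesis unfolding admissible_def by (intro exists_gamma_succ_dvd) auto
  qed
  then obtain j where j: "j \<in> {2..nu} - C" and e_dvd: "e dvd (\<gamma> j + 1) * g j" by blast
  have j1: "j \<in> {1..nu}" and one: "1 \<in> {1..nu}" using j nu_pos by auto
  obtain \<mu> q where \<mu>: "\<mu> \<in> box_on C" and eq: "(\<gamma> j + 1) * g j = val \<mu> + q * g 1"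
    using admissible_decomp[OF C(1) adm mult_gen_mem[OF j1] e_dvd] by blast
  have "(\<gamma> j + 1) * g j = val (\<lambda>t. \<mu> t + unit_vec 1 q t)"
    using eq lincomb_add[of nu g \<mu> "unit_vec 1 q"] lincomb_unit_vec[OF one, of g q] by simp
  moreover have "t \<in> insert 1 C" if "\<mu> t + unit_vec 1 q t \<noteq> 0" for t
    using that bounded_funsD(2)[OF \<mu>, of t] unfolding unit_vec_def by (auto split: if_splits)
  ultimately show ?thesis
    using admissible_insert[OF C(1) adm j e_dvd] j by blast
qed

lemma admissible_ordering:
  assumes "k < nu"
  shows "\<exists>\<sigma> lam e. \<sigma> 1 = 1 \<and> inj_on \<sigma> {1..k+1} \<and> \<sigma> ` {2..k+1} \<subseteq> {2..nu}
    \<and> admissible (\<sigma> ` {2..k+1}) e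
    \<and> (\<forall>i\<in>{2..k+1}. (\<gamma> (\<sigma> i) + 1) * g (\<sigma> i) = val (lam (\<sigma> i))
                     \<and> (\<forall>t. lam (\<sigma> i) t \<noteq> 0 \<longrightarrow> t \<in> \<sigma> ` {1..<i}))"
  using assms
proof (induction k)
  case 0
  have "admissible {} (g 1)" unfolding admissible_def by simp
  then show ?case by (intro exI[of _ id]) auto
next
  case (Suc k)
  then obtain \<sigma> lam e where \<sigma>: "\<sigma> 1 = 1" "inj_on \<sigma> {1..k+1}" "\<sigma> ` {2..k+1} \<subseteq> {2..nu}"
    and adm: "admissible (\<sigma> ` {2..k+1}) e"
    and rel: "\<forall>i\<in>{2..k+1}. (\<gamma> (\<sigma> i) + 1) * g (\<sigma> i) = val (lam (\<sigma> i))
                     \<and> (\<forall>t. lam (\<sigma> i) t \<noteq> 0 \<longrightarrow> t \<in> \<sigma> ` {1..<i})"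
    by auto
  let ?C = "\<sigma> ` {2..k+1}"
  have "card ?C = k" using card_image[OF inj_on_subset[OF \<sigma>(2)]] by simp
  then have "?C \<noteq> {2..nu}" using Suc.prems by auto
  then obtain j l where j: "j \<in> {2..nu} - ?C" and adm': "admissible (insert j ?C) (gcd e (g j))"
    and l: "(\<gamma> j + 1) * g j = val l" "\<forall>t. l t \<noteq> 0 \<longrightarrow> t \<in> insert 1 ?C"
    using admissible_extend[OF \<sigma>(3) _ adm] by blast
  define \<sigma>' where "\<sigma>' = \<sigma>(k+2 := j)"
  define lam' where "lam' = lam(j := l)"
  have \<sigma>'_eq: "\<sigma>' i = \<sigma> i" if "i \<le> k + 1" for i using that by (simp add: \<sigma>'_def)
  have image_eq: "\<sigma>' ` {1..<i} = \<sigma> ` {1..<i}" if "i \<le> k + 2" for i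
    using \<sigma>'_eq that by (intro image_cong) auto
  have prefix: "{1..<k+2} = insert 1 {2..k+1}" by auto
  have "{1..k+1} = insert 1 {2..k+1}" by auto
  then have j_new: "j \<notin> \<sigma> ` {1..k+1}" using j \<sigma>(1) by auto
  have "\<sigma>' 1 = 1" using \<sigma>(1) by (simp add: \<sigma>'_def)
  moreover have "inj_on \<sigma>' {1..Suc k+1}"
  proof -
    have "{1..Suc k+1} = insert (k+2) {1..k+1}" by auto
    moreover have "inj_on \<sigma>' {1..k+1}" using \<sigma>(2) \<sigma>'_eq by (simp add: inj_on_def)
    ultimately show ?thesis using j_new \<sigma>'_eq by (simp add: \<sigma>'_def image_def)
  qed
  moreover have "\<sigma>' ` {2..Suc k+1} = insert j ?C"
  proof -
    have "{2..Suc k+1} = insert (k+2) {2..k+1}" by auto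
    then have "\<sigma>' ` {2..Suc k+1} = insert (\<sigma>' (k+2)) (\<sigma>' ` {2..k+1})" by simp
    moreover have "\<sigma>' ` {2..k+1} = ?C" using \<sigma>'_eq by (intro image_cong) auto
    ultimately show ?thesis by (simp add: \<sigma>'_def)
  qed
  moreover have "(\<gamma> (\<sigma>' i) + 1) * g (\<sigma>' i) = val (lam' (\<sigma>' i))
      \<and> (\<forall>t. lam' (\<sigma>' i) t \<noteq> 0 \<longrightarrow> t \<in> \<sigma>' ` {1..<i})" if i: "i \<in> {2..Suc k+1}" for i
  proof (cases "i = k + 2")
    case True
    then have "\<sigma>' ` {1..<i} = insert 1 ?C" using image_eq[of i] \<sigma>(1) prefix by simp
    with True l show ?thesis by (simp add: \<sigma>'_def lam'_def)
  next
    case False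
    with i have "i \<in> {2..k+1}" by simp
    moreover from this have "\<sigma> i \<noteq> j" using j by auto
    ultimately show ?thesis using rel \<sigma>'_eq image_eq[of i] by (simp add: lam'_def)
  qed
  ultimately show ?case using \<sigma>(3) j adm' by (intro exI[of _ \<sigma>'] exI[of _ lam']) auto
qed

end

theorem mainTheorem3:
  fixes S :: "nat set" and g :: "nat \<Rightarrow> nat" and nu :: nat
  assumes "numerical_semigroup S"
    and "min_gens S g nu"
    and "gamma_rectangular S g nu"
  shows "\<exists>lam :: nat \<Rightarrow> nat \<Rightarrow> nat.
           (\<forall>i\<in>{2..nu}. (gamma S g nu i + 1) * g i = (\<Sum>j=1..nu. lam i j * g j)) \<and>
           (\<exists>\<sigma>. bij_betw \<sigma> {1..nu} {1..nu} \<and> \<sigma> 1 = 1 \<and>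
                (\<forall>i j. 2 \<le> i \<and> i \<le> j \<and> j \<le> nu \<longrightarrow> lam (\<sigma> i) (\<sigma> j) = 0))"
proof -
  interpret gamma_rectangular_semigroup S g nu using assms by unfold_locales
  obtain \<sigma> lam e where \<sigma>: "\<sigma> 1 = 1" "inj_on \<sigma> {1..nu}" "\<sigma> ` {2..nu} \<subseteq> {2..nu}"
    and rel: "\<forall>i\<in>{2..nu}. (\<gamma> (\<sigma> i) + 1) * g (\<sigma> i) = val (lam (\<sigma> i))
                     \<and> (\<forall>t. lam (\<sigma> i) t \<noteq> 0 \<longrightarrow> t \<in> \<sigma> ` {1..<i})"
    using admissible_ordering[of "nu - 1"] nu_pos by auto
  have "{1..nu} = insert 1 {2..nu}" using nu_pos by auto
  moreover have onto: "\<sigma> ` {2..nu} = {2..nu}"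
    using \<sigma>(2,3) by (intro endo_inj_surj) (auto intro: inj_on_subset)
  ultimately have "\<sigma> ` {1..nu} = {1..nu}" using \<sigma>(1) by (simp only: image_insert)
  with \<sigma>(2) have "bij_betw \<sigma> {1..nu} {1..nu}" unfolding bij_betw_def by blast
  moreover have "(\<gamma> i + 1) * g i = (\<Sum>j=1..nu. lam i j * g j)" if "i \<in> {2..nu}" for i
  proof -
    from that onto obtain k where "k \<in> {2..nu}" "i = \<sigma> k" by blast
    with rel show ?thesis unfolding lincomb_def by simp
  qed
  moreover have "lam (\<sigma> i) (\<sigma> j) = 0" if "2 \<le> i" "i \<le> j" "j \<le> nu" for i j
  proof (rule ccontr)
    assume "lam (\<sigma> i) (\<sigma> j) \<noteq> 0"
    with rel that have "\<sigma> j \<in> \<sigma> ` {1..<i}" by auto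
    with \<sigma>(2) that have "j < i" by (subst (asm) inj_on_image_mem_iff) auto
    with that show False by simp
  qed
  ultimately show ?thesis using \<sigma>(1) by blast
qed

end
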